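(* The following equalities hold: \[ \hat R^+=R^+,\qquad \hat S^+=S^+,\qquad \hat R^-=R^-,\qquad \hat S^-=S^- . \]
   Context: $G$ is an unbounded multiply connected region of connectivity $m$ with $\infty\in G$ and $0\in G$. Its boundary is $\Gamma=\Gamma_1\cup\dots\cup\Gamma_m$, consisting of simple, non-intersecting, smooth, clockwise oriented closed curves. $G^-:=(\mathbb C\cup\{\infty\})\setminus(G\cup\Gamma)$ is the union of the bounded simply connected regions $G_k$ enclosed by $\Gamma_k$. Each $\Gamma_k$ is parametrized by a $2\pi$-periodic, twice continuously differentiable function $\eta_k$ with $\dot\eta_k\ne0$. $J$ is the disjoint union of $J_k=[0,2\pi]$, and $\eta=\eta_k$ on $J_k$. $H$ is the space of real functions on $J$ that are Hölder continuous and $2\pi$-periodic on each $J_k$. Functions on boundaries are identified with functions on $J$ via the parametrization. $A$ is a nonvanishing complex function on $\Gamma$ with continuously differentiable parametric form on $J$. Fix $z_0\in G_m$ and let $\Psi(z)=1/(z-z_0)$, $\hat G=\Psi(G)$ (bounded), $\hat G^-=\Psi(G^-)$ (unbounded), $\hat\Gamma=\Psi(\Gamma)$ with parametrization $\zeta(s)=1/(\eta(s)-z_0)$, and $\hat A(s)=\zeta(s)A(s)$. Analytic functions are continuous up to the boundary; boundary values are taken from the indicated region. The spaces are defined as follows: \[ \begin{aligned} R^+&=\{\gamma\in H:\gamma=\operatorname{Re}[Af^+],\ f \text{ analytic in } G,\ f(\infty)=0\},\\ S^+&=\{\gamma\in H:\gamma=Af^+,\ f \text{ analytic in } G,\ f(\infty)=0\},\\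 R^-&=\{\gamma\in H:\gamma=\operatorname{Re}[Ag^-],\ g \text{ analytic in } G^-\},\\ S^-&=\{\gamma\in H:\gamma=Ag^-,\ g \text{ analytic in } G^-\},\\ \hat R^+&=\{\gamma\in H:\gamma=\operatorname{Re}[\hat A\hat f^+],\ \hat f \text{ analytic in } \hat G\},\\ \hat S^+&=\{\gamma\in H:\gamma=\hat A\hat f^+,\ \hat f \text{ analytic in } \hat G\},\\ \hat R^-&=\{\gamma\in H:\gamma=\operatorname{Re}[\hat A\hat g^-],\ \hat g \text{ analytic in } \hat G^-,\ \hat g(\infty)=0\},\\ \hat S^-&=\{\gamma\in H:\gamma=\hat A\hat g^-,\ \hat g \text{ analytic in } \hat G^-,\ \hat g(\infty)=0\}. \end{aligned} \] In the definitions of the $S$-spaces, the function $Af^+$ (resp. $Ag^-$, $\hat A\hat f^+$, $\hat A\hat g^-$) is required to be real. *)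

theory Defs
  imports "HOL-Complex_Analysis.Complex_Analysis"
begin

text \<open>Functions on J = disjoint union of J_k = [0,2pi], k = 1..m, are modelled as
  functions of type nat => real => _ (first argument = index k, second = parameter s).\<close>

definition holder_cont :: "(real \<Rightarrow> real) \<Rightarrow> bool" where
  "holder_cont u \<longleftrightarrow> (\<exists>\<alpha> C. 0 < \<alpha> \<and> \<alpha> \<le> 1 \<and>
      (\<forall>s\<in>{0..2*pi}. \<forall>t\<in>{0..2*pi}. \<bar>u s - u t\<bar> \<le> C * \<bar>s - t\<bar> powr \<alpha>))"

definition Hsp :: "nat \<Rightarrow> (nat \<Rightarrow> real \<Rightarrow> real) set" where
  "Hsp m = {\<gamma>. \<forall>k\<in>{1..m}. holder_cont (\<gamma> k) \<and> (\<forall>s. \<gamma> k (s + 2*pi) = \<gamma> k s)}"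

definition Gam_k :: "(nat \<Rightarrow> real \<Rightarrow> complex) \<Rightarrow> nat \<Rightarrow> complex set" where
  "Gam_k \<eta> k = \<eta> k ` {0..2*pi}"

definition Gam :: "nat \<Rightarrow> (nat \<Rightarrow> real \<Rightarrow> complex) \<Rightarrow> complex set" where
  "Gam m \<eta> = (\<Union>k\<in>{1..m}. Gam_k \<eta> k)"

definition Gminus :: "nat \<Rightarrow> (nat \<Rightarrow> real \<Rightarrow> complex) \<Rightarrow> complex set" where
  "Gminus m \<eta> = (\<Union>k\<in>{1..m}. inside (Gam_k \<eta> k))"

definition Psi :: "complex \<Rightarrow> complex \<Rightarrow> complex" where
  "Psi z0 z = 1 / (z - z0)"

text \<open>hat G = Psi(G); since infinity is in G and Psi(infinity) = 0, 0 belongs to hat G.\<close>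
definition Ghat :: "complex \<Rightarrow> complex set \<Rightarrow> complex set" where
  "Ghat z0 G = Psi z0 ` G \<union> {0}"

text \<open>hat G^- = Psi(G^-); the point z0 is mapped to infinity, so the finite part is
  Psi(G^- - {z0}).\<close>
definition Gminus_hat :: "complex \<Rightarrow> nat \<Rightarrow> (nat \<Rightarrow> real \<Rightarrow> complex) \<Rightarrow> complex set" where
  "Gminus_hat z0 m \<eta> = Psi z0 ` (Gminus m \<eta> - {z0})"

definition zeta :: "complex \<Rightarrow> (nat \<Rightarrow> real \<Rightarrow> complex) \<Rightarrow> nat \<Rightarrow> real \<Rightarrow> complex" where
  "zeta z0 \<eta> k s = 1 / (\<eta> k s - z0)"

definition Ahat :: "complex \<Rightarrow> (nat \<Rightarrow> real \<Rightarrow> complex) \<Rightarrow> (nat \<Rightarrow> real \<Rightarrow> complex)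
    \<Rightarrow> nat \<Rightarrow> real \<Rightarrow> complex" where
  "Ahat z0 \<eta> A k s = zeta z0 \<eta> k s * A k s"

text \<open>"f analytic in D, continuous up to the boundary": holomorphic on the open set D and
  continuous on its closure; boundary values are then the values on the boundary.
  For unbounded D, "f(infinity) = 0" is expressed by f tending to 0 at infinity
  (together with holomorphy near infinity this means f is analytic at infinity with value 0).\<close>

definition Rplus :: "nat \<Rightarrow> (nat \<Rightarrow> real \<Rightarrow> complex) \<Rightarrow> complex set \<Rightarrow> (nat \<Rightarrow> real \<Rightarrow> complex)
    \<Rightarrow> (nat \<Rightarrow> real \<Rightarrow> real) set" where
  "Rplus m \<eta> G A = {\<gamma> \<in> Hsp m. \<exists>f. f holomorphic_on G \<and> continuous_on (closure G) f \<and>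
      (f \<longlongrightarrow> 0) at_infinity \<and>
      (\<forall>k\<in>{1..m}. \<forall>s\<in>{0..2*pi}. \<gamma> k s = Re (A k s * f (\<eta> k s)))}"

definition Splus :: "nat \<Rightarrow> (nat \<Rightarrow> real \<Rightarrow> complex) \<Rightarrow> complex set \<Rightarrow> (nat \<Rightarrow> real \<Rightarrow> complex)
    \<Rightarrow> (nat \<Rightarrow> real \<Rightarrow> real) set" where
  "Splus m \<eta> G A = {\<gamma> \<in> Hsp m. \<exists>f. f holomorphic_on G \<and> continuous_on (closure G) f \<and>
      (f \<longlongrightarrow> 0) at_infinity \<and>
      (\<forall>k\<in>{1..m}. \<forall>s\<in>{0..2*pi}. complex_of_real (\<gamma> k s) = A k s * f (\<eta> k s))}"

definition Rminus :: "nat \<Rightarrow> (nat \<Rightarrow> real \<Rightarrow> complex) \<Rightarrow> (nat \<Rightarrow> real \<Rightarrow> complex)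
    \<Rightarrow> (nat \<Rightarrow> real \<Rightarrow> real) set" where
  "Rminus m \<eta> A = {\<gamma> \<in> Hsp m. \<exists>g. g holomorphic_on Gminus m \<eta> \<and>
      continuous_on (closure (Gminus m \<eta>)) g \<and>
      (\<forall>k\<in>{1..m}. \<forall>s\<in>{0..2*pi}. \<gamma> k s = Re (A k s * g (\<eta> k s)))}"

definition Sminus :: "nat \<Rightarrow> (nat \<Rightarrow> real \<Rightarrow> complex) \<Rightarrow> (nat \<Rightarrow> real \<Rightarrow> complex)
    \<Rightarrow> (nat \<Rightarrow> real \<Rightarrow> real) set" where
  "Sminus m \<eta> A = {\<gamma> \<in> Hsp m. \<exists>g. g holomorphic_on Gminus m \<eta> \<and>
      continuous_on (closure (Gminus m \<eta>)) g \<and>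
      (\<forall>k\<in>{1..m}. \<forall>s\<in>{0..2*pi}. complex_of_real (\<gamma> k s) = A k s * g (\<eta> k s))}"

definition Rplus_hat :: "complex \<Rightarrow> nat \<Rightarrow> (nat \<Rightarrow> real \<Rightarrow> complex) \<Rightarrow> complex set
    \<Rightarrow> (nat \<Rightarrow> real \<Rightarrow> complex) \<Rightarrow> (nat \<Rightarrow> real \<Rightarrow> real) set" where
  "Rplus_hat z0 m \<eta> G A = {\<gamma> \<in> Hsp m. \<exists>f. f holomorphic_on Ghat z0 G \<and>
      continuous_on (closure (Ghat z0 G)) f \<and>
      (\<forall>k\<in>{1..m}. \<forall>s\<in>{0..2*pi}. \<gamma> k s = Re (Ahat z0 \<eta> A k s * f (zeta z0 \<eta> k s)))}"

definition Splus_hat :: "complex \<Rightarrow> nat \<Rightarrow> (nat \<Rightarrow> real \<Rightarrow> complex) \<Rightarrow> complex set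
    \<Rightarrow> (nat \<Rightarrow> real \<Rightarrow> complex) \<Rightarrow> (nat \<Rightarrow> real \<Rightarrow> real) set" where
  "Splus_hat z0 m \<eta> G A = {\<gamma> \<in> Hsp m. \<exists>f. f holomorphic_on Ghat z0 G \<and>
      continuous_on (closure (Ghat z0 G)) f \<and>
      (\<forall>k\<in>{1..m}. \<forall>s\<in>{0..2*pi}.
         complex_of_real (\<gamma> k s) = Ahat z0 \<eta> A k s * f (zeta z0 \<eta> k s))}"

definition Rminus_hat :: "complex \<Rightarrow> nat \<Rightarrow> (nat \<Rightarrow> real \<Rightarrow> complex)
    \<Rightarrow> (nat \<Rightarrow> real \<Rightarrow> complex) \<Rightarrow> (nat \<Rightarrow> real \<Rightarrow> real) set" where
  "Rminus_hat z0 m \<eta> A = {\<gamma> \<in> Hsp m. \<exists>g. g holomorphic_on Gminus_hat z0 m \<eta> \<and>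
      continuous_on (closure (Gminus_hat z0 m \<eta>)) g \<and> (g \<longlongrightarrow> 0) at_infinity \<and>
      (\<forall>k\<in>{1..m}. \<forall>s\<in>{0..2*pi}. \<gamma> k s = Re (Ahat z0 \<eta> A k s * g (zeta z0 \<eta> k s)))}"

definition Sminus_hat :: "complex \<Rightarrow> nat \<Rightarrow> (nat \<Rightarrow> real \<Rightarrow> complex)
    \<Rightarrow> (nat \<Rightarrow> real \<Rightarrow> complex) \<Rightarrow> (nat \<Rightarrow> real \<Rightarrow> real) set" where
  "Sminus_hat z0 m \<eta> A = {\<gamma> \<in> Hsp m. \<exists>g. g holomorphic_on Gminus_hat z0 m \<eta> \<and>
      continuous_on (closure (Gminus_hat z0 m \<eta>)) g \<and> (g \<longlongrightarrow> 0) at_infinity \<and>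
      (\<forall>k\<in>{1..m}. \<forall>s\<in>{0..2*pi}.
         complex_of_real (\<gamma> k s) = Ahat z0 \<eta> A k s * g (zeta z0 \<eta> k s))}"

end

theory Submission
  imports Defs
begin

text \<open>The Moebius map Psi z = 1/(z - z0) has inverse w \<mapsto> z0 + 1/w, and
  f z = fh (Psi z) * Psi z, i.e. fh w = f (z0 + 1/w) / w, is a bijection between functions on
  G (resp. G^-) and functions on hat G (resp. hat G^-). On the curves it turns A f into
  (zeta A) fh = hat A fh, so the four pairs of spaces coincide as soon as the transform
  respects the function classes. For G: f vanishing at infinity means f (z0 + 1/w) \<rightarrow> 0 as
  w \<rightarrow> 0, so fh has a removable singularity at 0 = Psi \<infinity>, while conversely fh bounded
  near 0 forces f = O(1/z). For G^-: g holomorphic at z0 gives gh = O(1/w) at infinity, and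
  conversely gh (Psi z) \<rightarrow> 0 as z \<rightarrow> z0 makes gh (Psi z) / (z - z0) removable at z0.
  Continuity up to the boundary transfers because the pole of each map stays away from the
  closure of the region it is applied on.\<close>

definition Psi_inv :: "complex \<Rightarrow> complex \<Rightarrow> complex" where
  "Psi_inv z0 w = z0 + 1 / w"

lemma Psi_inv_Psi [simp]: "z \<noteq> z0 \<Longrightarrow> Psi_inv z0 (Psi z0 z) = z"
  by (simp add: Psi_def Psi_inv_def)

lemma Psi_Psi_inv [simp]: "w \<noteq> 0 \<Longrightarrow> Psi z0 (Psi_inv z0 w) = w"
  by (simp add: Psi_def Psi_inv_def)

lemma Psi_eq_0_iff [simp]: "Psi z0 z = 0 \<longleftrightarrow> z = z0"
  by (simp add: Psi_def)

lemma Psi_image_eq: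
  assumes "z0 \<notin> D"
  shows "Psi z0 ` D = {w. w \<noteq> 0 \<and> Psi_inv z0 w \<in> D}"
proof (intro set_eqI iffI)
  fix w assume "w \<in> Psi z0 ` D"
  then obtain z where "z \<in> D" "z \<noteq> z0" "w = Psi z0 z"
    using assms by blast
  then show "w \<in> {w. w \<noteq> 0 \<and> Psi_inv z0 w \<in> D}" by simp
next
  fix w assume "w \<in> {w. w \<noteq> 0 \<and> Psi_inv z0 w \<in> D}"
  then show "w \<in> Psi z0 ` D"
    by (auto intro: image_eqI[of w _ "Psi_inv z0 w"])
qed

lemma Psi_inv_image_Psi_image:
  assumes "z0 \<notin> D"
  shows "Psi_inv z0 ` Psi z0 ` D = D"
proof -
  have "Psi_inv z0 (Psi z0 z) = z" if "z \<in> D" for z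
    using assms that by (intro Psi_inv_Psi) blast
  then show ?thesis
    unfolding image_image by simp
qed

lemma holomorphic_on_Psi: "z0 \<notin> S \<Longrightarrow> Psi z0 holomorphic_on S"
  unfolding Psi_def by (intro holomorphic_intros) auto

lemma holomorphic_on_Psi_inv: "0 \<notin> S \<Longrightarrow> Psi_inv z0 holomorphic_on S"
  unfolding Psi_inv_def by (intro holomorphic_intros) auto

lemma continuous_on_Psi: "z0 \<notin> S \<Longrightarrow> continuous_on S (Psi z0)"
  by (rule holomorphic_on_imp_continuous_on[OF holomorphic_on_Psi])

lemma continuous_on_Psi_inv: "0 \<notin> S \<Longrightarrow> continuous_on S (Psi_inv z0)"
  by (rule holomorphic_on_imp_continuous_on[OF holomorphic_on_Psi_inv])

lemma open_Psi_image:
  assumes "open D" and "z0 \<notin> D"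
  shows "open (Psi z0 ` D)"
proof -
  have "open (- {0} \<inter> Psi_inv z0 -` D)"
    using assms(1) by (intro continuous_open_preimage continuous_on_Psi_inv) auto
  moreover have "Psi z0 ` D = - {0} \<inter> Psi_inv z0 -` D"
    using Psi_image_eq[OF assms(2)] by auto
  ultimately show ?thesis by simp
qed

lemma tendsto_Psi_at_infinity: "(Psi z0 \<longlongrightarrow> 0) at_infinity"
proof -
  have "filterlim (\<lambda>z. z - z0) at_infinity at_infinity"
    using tendsto_add_filterlim_at_infinity'[of "\<lambda>z. z" at_infinity "\<lambda>_. - z0" "- z0"]
    by (simp add: filterlim_ident)
  then show ?thesis
    unfolding Psi_def by (intro tendsto_divide_0[where c = 1]) auto
qed

lemma filterlim_Psi_at_infinity: "filterlim (Psi z0) at_infinity (at z0)"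
proof -
  have "filterlim (\<lambda>z. z - z0) (at 0) (at z0)"
    unfolding filterlim_at by (auto simp: eventually_at_filter intro!: tendsto_eq_intros)
  then show ?thesis
    unfolding Psi_def by (intro filterlim_divide_at_infinity[where c = 1]) auto
qed

lemma tendsto_Psi_inv_at_infinity: "(Psi_inv z0 \<longlongrightarrow> z0) at_infinity"
  using tendsto_add[OF tendsto_const tendsto_inverse_0, of z0]
  by (simp add: Psi_inv_def[abs_def] inverse_eq_divide)

lemma filterlim_Psi_inv_at_infinity: "filterlim (Psi_inv z0) at_infinity (at 0)"
  using tendsto_add_filterlim_at_infinity[OF tendsto_const filterlim_inverse_at_infinity, of z0]
  by (simp add: Psi_inv_def[abs_def] inverse_eq_divide)

lemma continuous_on_closure_compose:
  assumes "continuous_on (closure S) \<phi>" and "\<phi> ` S \<subseteq> T" and "continuous_on (closure T) f"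
  shows "continuous_on (closure S) (f \<circ> \<phi>)"
proof -
  have "\<phi> ` closure S \<subseteq> closure T"
    using assms(1,2) closure_subset by (intro image_closure_subset) auto
  then show ?thesis
    by (rule continuous_on_compose[OF assms(1) continuous_on_subset[OF assms(3)]])
qed

lemma center_notin_closure_diff_ball:
  assumes "0 < \<delta>"
  shows "p \<notin> closure (S - ball p \<delta>)"
proof -
  have "closure (S - ball p \<delta>) \<subseteq> - ball p \<delta>"
    by (intro closure_minimal) auto
  then show ?thesis using assms by auto
qed

lemma closure_subset_cball_Un_closure_diff_ball:
  "closure S \<subseteq> cball p \<delta> \<union> closure (S - ball p \<delta>)"
proof
  fix x assume x: "x \<in> closure S"
  show "x \<in> cball p \<delta> \<union> closure (S - ball p \<delta>)"
  proof (cases "x \<in> cball p \<delta>")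
    case False
    then have "x \<in> - cball p \<delta> \<inter> closure S" using x by blast
    also have "\<dots> \<subseteq> closure (- cball p \<delta> \<inter> S)" by (rule open_Int_closure_subset) auto
    also have "\<dots> \<subseteq> closure (S - ball p \<delta>)" by (intro closure_mono) auto
    finally show ?thesis by blast
  qed simp
qed

lemma removable_pole_extension:
  fixes h :: "complex \<Rightarrow> complex"
  assumes S: "open S" "p \<in> S" and hol: "h holomorphic_on S - {p}" and lim: "(h \<longlongrightarrow> 0) (at p)"
    and cont: "\<And>\<delta>. 0 < \<delta> \<Longrightarrow> continuous_on (closure (S - ball p \<delta>)) h"
  obtains c where "(\<lambda>z. if z = p then c else h z / (z - p)) holomorphic_on S"
    and "continuous_on (closure S) (\<lambda>z. if z = p then c else h z / (z - p))"
proof -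
  \<comment> \<open>Extended by 0, h becomes holomorphic with value 0 at p, so h z / (z - p) is its
    difference quotient at p.\<close>
  define H where "H = (\<lambda>z. if z = p then 0 else h z)"
  define g where "g = (\<lambda>z. if z = p then deriv H p else h z / (z - p))"
  have "H holomorphic_on S"
    unfolding H_def using removable_singularity[OF hol S(1) lim] .
  then have "(\<lambda>z. if z = p then deriv H p else (H z - H p) / (z - p)) holomorphic_on S"
    using S by (intro pole_lemma) (simp_all add: interior_open)
  then have hol_g: "g holomorphic_on S"
    by (rule holomorphic_transform) (simp add: g_def H_def)
  obtain \<delta> where \<delta>: "\<delta> > 0" "cball p \<delta> \<subseteq> S"
    using S open_contains_cball by blast
  have "closure S \<subseteq> cball p \<delta> \<union> closure (S - ball p \<delta>)"
    by (rule closure_subset_cball_Un_closure_diff_ball)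
  moreover have "continuous_on (cball p \<delta>) g"
    using holomorphic_on_imp_continuous_on[OF hol_g] \<delta>(2) by (rule continuous_on_subset)
  moreover have "continuous_on (closure (S - ball p \<delta>)) g"
  proof -
    have p_notin: "p \<notin> closure (S - ball p \<delta>)"
      using center_notin_closure_diff_ball[OF \<delta>(1)] .
    have "continuous_on (closure (S - ball p \<delta>)) (\<lambda>z. h z / (z - p))"
      using cont[OF \<delta>(1)] p_notin by (intro continuous_intros) auto
    then show ?thesis
      by (rule continuous_on_eq) (use p_notin in \<open>auto simp: g_def\<close>)
  qed
  ultimately have "continuous_on (closure S) g"
    by (meson closed_cball closed_closure continuous_on_closed_Un continuous_on_subset)
  with hol_g show thesis
    by (intro that[of "deriv H p"]) (simp_all add: g_def)
qed

lemma Psi_transform_to_Ghat: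
  assumes G: "open G" "z0 \<notin> G" and far: "eventually (\<lambda>z. z \<in> G) at_infinity"
    and f: "f holomorphic_on G" "continuous_on (closure G) f" "(f \<longlongrightarrow> 0) at_infinity"
  obtains fh where "fh holomorphic_on Ghat z0 G" and "continuous_on (closure (Ghat z0 G)) fh"
    and "\<And>z. z \<noteq> z0 \<Longrightarrow> f z = fh (Psi z0 z) * Psi z0 z"
proof -
  have punctured: "Ghat z0 G - {0} = Psi z0 ` G"
    using G(2) by (auto simp: Ghat_def)
  have "eventually (\<lambda>w. Psi_inv z0 w \<in> G) (at 0)"
    using filterlim_Psi_inv_at_infinity far unfolding filterlim_iff by blast
  then obtain r where r: "r > 0" "\<And>w. w \<noteq> 0 \<Longrightarrow> dist w 0 < r \<Longrightarrow> Psi_inv z0 w \<in> G"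
    unfolding eventually_at by blast
  have "ball 0 r \<subseteq> Ghat z0 G"
  proof
    fix w :: complex assume w: "w \<in> ball 0 r"
    show "w \<in> Ghat z0 G"
    proof (cases "w = 0")
      case False
      then have "w = Psi z0 (Psi_inv z0 w)" and "Psi_inv z0 w \<in> G"
        using w r(2) by (auto simp: dist_commute)
      then show ?thesis unfolding Ghat_def by blast
    qed (simp add: Ghat_def)
  qed
  then have "Ghat z0 G = Psi z0 ` G \<union> ball 0 r"
    using punctured r(1) by auto
  then have open_Ghat: "open (Ghat z0 G)"
    by (simp only:) (intro open_Un open_Psi_image G open_ball)
  have zero_in: "0 \<in> Ghat z0 G"
    by (simp add: Ghat_def)
  have "(\<lambda>w. f (Psi_inv z0 w)) holomorphic_on Ghat z0 G - {0}"
    unfolding punctured using G(2)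
    by (intro holomorphic_on_compose_gen[OF holomorphic_on_Psi_inv f(1), unfolded o_def])
      (auto simp: Psi_inv_image_Psi_image)
  moreover have "((\<lambda>w. f (Psi_inv z0 w)) \<longlongrightarrow> 0) (at 0)"
    by (rule filterlim_compose[OF f(3) filterlim_Psi_inv_at_infinity])
  moreover have "continuous_on (closure (Ghat z0 G - ball 0 \<delta>)) (\<lambda>w. f (Psi_inv z0 w))"
    if "0 < \<delta>" for \<delta>
  proof -
    have "Ghat z0 G - ball 0 \<delta> \<subseteq> Psi z0 ` G"
      using punctured \<open>0 < \<delta>\<close> by auto
    then have "Psi_inv z0 ` (Ghat z0 G - ball 0 \<delta>) \<subseteq> G"
      using Psi_inv_image_Psi_image[OF G(2)] by blast
    with center_notin_closure_diff_ball[OF \<open>0 < \<delta>\<close>] show ?thesis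
      by (intro continuous_on_closure_compose[OF continuous_on_Psi_inv _ f(2), unfolded o_def])
  qed
  ultimately obtain c
    where "(\<lambda>w. if w = 0 then c else f (Psi_inv z0 w) / (w - 0)) holomorphic_on Ghat z0 G"
      and "continuous_on (closure (Ghat z0 G)) (\<lambda>w. if w = 0 then c else f (Psi_inv z0 w) / (w - 0))"
    using removable_pole_extension[OF open_Ghat zero_in] by blast
  then show thesis
    by (rule that) simp
qed

lemma Psi_transform_from_Ghat:
  assumes z0: "z0 \<notin> closure G" and far: "eventually (\<lambda>z. z \<in> G) at_infinity"
    and fh: "fh holomorphic_on Ghat z0 G" "continuous_on (closure (Ghat z0 G)) fh"
  obtains f where "f holomorphic_on G" and "continuous_on (closure G) f"
    and "(f \<longlongrightarrow> 0) at_infinity" and "\<And>z. z \<noteq> z0 \<Longrightarrow> f z = fh (Psi z0 z) * Psi z0 z"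
proof -
  define f where "f z = fh (Psi z0 z) * Psi z0 z" for z
  have "z0 \<notin> G" using z0 closure_subset[of G] by blast
  have img: "Psi z0 ` G \<subseteq> Ghat z0 G" by (auto simp: Ghat_def)
  have "f holomorphic_on G"
    using holomorphic_on_compose_gen[OF holomorphic_on_Psi fh(1) img] \<open>z0 \<notin> G\<close>
    unfolding f_def by (intro holomorphic_on_mult holomorphic_on_Psi) (simp_all add: o_def)
  moreover have "continuous_on (closure G) f"
    using continuous_on_closure_compose[OF continuous_on_Psi[OF z0] img fh(2)] z0
    unfolding f_def by (intro continuous_on_mult continuous_on_Psi) (simp_all add: o_def)
  moreover have "(f \<longlongrightarrow> 0) at_infinity"
  proof -
    have "0 \<in> Ghat z0 G" by (simp add: Ghat_def)
    then have "(fh \<longlongrightarrow> fh 0) (at 0 within Ghat z0 G)"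
      using holomorphic_on_imp_continuous_on[OF fh(1)] by (simp add: continuous_on_def)
    moreover have "filterlim (Psi z0) (at 0 within Ghat z0 G) at_infinity"
      unfolding filterlim_at
    proof
      show "eventually (\<lambda>z. Psi z0 z \<in> Ghat z0 G \<and> Psi z0 z \<noteq> 0) at_infinity"
        using far by eventually_elim (use \<open>z0 \<notin> G\<close> img in auto)
    qed (rule tendsto_Psi_at_infinity)
    ultimately have "((\<lambda>z. fh (Psi z0 z)) \<longlongrightarrow> fh 0) at_infinity"
      by (rule filterlim_compose)
    from tendsto_mult[OF this tendsto_Psi_at_infinity] show ?thesis
      unfolding f_def by simp
  qed
  ultimately show thesis
    by (rule that) (simp add: f_def)
qed

lemma Psi_transform_to_punctured_image:
  assumes D: "open D" "bounded D" "z0 \<in> D"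
    and g: "g holomorphic_on D" "continuous_on (closure D) g"
  obtains gh where "gh holomorphic_on Psi z0 ` (D - {z0})"
    and "continuous_on (closure (Psi z0 ` (D - {z0}))) gh" and "(gh \<longlongrightarrow> 0) at_infinity"
    and "\<And>z. z \<noteq> z0 \<Longrightarrow> g z = gh (Psi z0 z) * Psi z0 z"
proof -
  let ?E = "Psi z0 ` (D - {z0})"
  define gh where "gh w = g (Psi_inv z0 w) / w" for w
  have img: "Psi_inv z0 ` ?E \<subseteq> D"
    by (simp add: Psi_inv_image_Psi_image)
  obtain \<rho> where "\<rho> > 0" and \<rho>: "D \<subseteq> ball z0 \<rho>"
    using bounded_subset_ballD[OF D(2)] by blast
  have "?E \<subseteq> - ball 0 (1 / \<rho>)"
  proof
    fix w assume "w \<in> ?E"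
    then obtain z where z: "z \<in> D" "z \<noteq> z0" "w = Psi z0 z" by blast
    then have dist: "0 < norm (z - z0)" "norm (z - z0) < \<rho>"
      using \<rho> by (auto simp: dist_norm norm_minus_commute)
    have "1 / \<rho> < 1 / norm (z - z0)"
      using dist by (rule frac_less2[OF zero_less_one order_refl])
    then show "w \<in> - ball 0 (1 / \<rho>)"
      using z by (simp add: Psi_def norm_divide)
  qed
  then have "closure ?E \<subseteq> - ball 0 (1 / \<rho>)"
    by (intro closure_minimal) auto
  then have "0 \<notin> closure ?E" using \<open>\<rho> > 0\<close> by auto
  then have "0 \<notin> ?E" using closure_subset[of ?E] by blast
  have "gh holomorphic_on ?E"
    using holomorphic_on_compose_gen[OF holomorphic_on_Psi_inv g(1) img] \<open>0 \<notin> ?E\<close>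
    unfolding gh_def by (intro holomorphic_intros) (auto simp: o_def)
  moreover have "continuous_on (closure ?E) gh"
    using continuous_on_closure_compose[OF continuous_on_Psi_inv img g(2)] \<open>0 \<notin> closure ?E\<close>
    unfolding gh_def by (intro continuous_intros) (auto simp: o_def)
  moreover have "isCont g z0"
    using continuous_on_eq_continuous_at[OF D(1)] holomorphic_on_imp_continuous_on[OF g(1)] D(3)
    by blast
  then have "((\<lambda>w. g (Psi_inv z0 w)) \<longlongrightarrow> g z0) at_infinity"
    by (rule isCont_tendsto_compose[OF _ tendsto_Psi_inv_at_infinity])
  then have "(gh \<longlongrightarrow> 0) at_infinity"
    unfolding gh_def by (rule tendsto_divide_0) (simp add: filterlim_ident)
  moreover have "g z = gh (Psi z0 z) * Psi z0 z" if "z \<noteq> z0" for z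
    using that by (simp add: gh_def)
  ultimately show thesis
    by (rule that)
qed

lemma Psi_transform_from_punctured_image:
  assumes D: "open D" "z0 \<in> D"
    and gh: "gh holomorphic_on Psi z0 ` (D - {z0})"
      "continuous_on (closure (Psi z0 ` (D - {z0}))) gh" "(gh \<longlongrightarrow> 0) at_infinity"
  obtains g where "g holomorphic_on D" and "continuous_on (closure D) g"
    and "\<And>z. z \<noteq> z0 \<Longrightarrow> g z = gh (Psi z0 z) * Psi z0 z"
proof -
  have "(\<lambda>z. gh (Psi z0 z)) holomorphic_on D - {z0}"
    by (intro holomorphic_on_compose_gen[OF holomorphic_on_Psi gh(1), unfolded o_def]) auto
  moreover have "((\<lambda>z. gh (Psi z0 z)) \<longlongrightarrow> 0) (at z0)"
    by (rule filterlim_compose[OF gh(3) filterlim_Psi_at_infinity])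
  moreover have "continuous_on (closure (D - ball z0 \<delta>)) (\<lambda>z. gh (Psi z0 z))"
    if "0 < \<delta>" for \<delta>
  proof -
    have "Psi z0 ` (D - ball z0 \<delta>) \<subseteq> Psi z0 ` (D - {z0})"
      using \<open>0 < \<delta>\<close> by auto
    with center_notin_closure_diff_ball[OF \<open>0 < \<delta>\<close>] show ?thesis
      by (intro continuous_on_closure_compose[OF continuous_on_Psi _ gh(2), unfolded o_def])
  qed
  ultimately obtain c
    where "(\<lambda>z. if z = z0 then c else gh (Psi z0 z) / (z - z0)) holomorphic_on D"
      and "continuous_on (closure D) (\<lambda>z. if z = z0 then c else gh (Psi z0 z) / (z - z0))"
    using removable_pole_extension[OF D] by blast
  then show thesis
    by (rule that) (simp add: Psi_def)
qed

lemma boundary_values_Psi_transform: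
  assumes "z0 \<notin> Gam m \<eta>" and "\<And>z. z \<noteq> z0 \<Longrightarrow> f z = fh (Psi z0 z) * Psi z0 z"
  shows "\<forall>k\<in>{1..m}. \<forall>s\<in>{0..2*pi}. Ahat z0 \<eta> A k s * fh (zeta z0 \<eta> k s) = A k s * f (\<eta> k s)"
proof (intro ballI)
  fix k s assume "k \<in> {1..m}" and "s \<in> {0..2*pi}"
  then have "\<eta> k s \<in> Gam m \<eta>"
    unfolding Gam_def Gam_k_def by blast
  then have "\<eta> k s \<noteq> z0"
    using assms(1) by blast
  then show "Ahat z0 \<eta> A k s * fh (zeta z0 \<eta> k s) = A k s * f (\<eta> k s)"
    using assms(2) by (simp add: Ahat_def zeta_def Psi_def)
qed

text \<open>The relation R is x = Re y for the R-spaces and complex_of_real x = y for the S-spaces.\<close>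

lemma Collect_boundary_relation_eq:
  assumes "\<And>f. P f \<Longrightarrow> \<exists>g. Q g \<and> (\<forall>k\<in>K. \<forall>s\<in>I. a f k s = b g k s)"
    and "\<And>g. Q g \<Longrightarrow> \<exists>f. P f \<and> (\<forall>k\<in>K. \<forall>s\<in>I. a f k s = b g k s)"
  shows "{\<gamma> \<in> H. \<exists>f. P f \<and> (\<forall>k\<in>K. \<forall>s\<in>I. R (\<gamma> k s) (a f k s))} =
         {\<gamma> \<in> H. \<exists>g. Q g \<and> (\<forall>k\<in>K. \<forall>s\<in>I. R (\<gamma> k s) (b g k s))}"
proof (intro set_eqI iffI)
  fix \<gamma> assume "\<gamma> \<in> {\<gamma> \<in> H. \<exists>f. P f \<and> (\<forall>k\<in>K. \<forall>s\<in>I. R (\<gamma> k s) (a f k s))}"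
  then obtain f where "\<gamma> \<in> H" "P f" and \<gamma>: "\<forall>k\<in>K. \<forall>s\<in>I. R (\<gamma> k s) (a f k s)"
    by blast
  moreover obtain g where "Q g" and "\<forall>k\<in>K. \<forall>s\<in>I. a f k s = b g k s"
    using assms(1)[OF \<open>P f\<close>] by blast
  ultimately show "\<gamma> \<in> {\<gamma> \<in> H. \<exists>g. Q g \<and> (\<forall>k\<in>K. \<forall>s\<in>I. R (\<gamma> k s) (b g k s))}"
    by auto
next
  fix \<gamma> assume "\<gamma> \<in> {\<gamma> \<in> H. \<exists>g. Q g \<and> (\<forall>k\<in>K. \<forall>s\<in>I. R (\<gamma> k s) (b g k s))}"
  then obtain g where "\<gamma> \<in> H" "Q g" and \<gamma>: "\<forall>k\<in>K. \<forall>s\<in>I. R (\<gamma> k s) (b g k s)"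
    by blast
  moreover obtain f where "P f" and "\<forall>k\<in>K. \<forall>s\<in>I. a f k s = b g k s"
    using assms(2)[OF \<open>Q g\<close>] by blast
  ultimately show "\<gamma> \<in> {\<gamma> \<in> H. \<exists>f. P f \<and> (\<forall>k\<in>K. \<forall>s\<in>I. R (\<gamma> k s) (a f k s))}"
    by auto
qed

lemma Rplus_Splus_hat_eq:
  assumes G: "open G" "z0 \<notin> closure G" and far: "eventually (\<lambda>z. z \<in> G) at_infinity"
    and z0: "z0 \<notin> Gam m \<eta>"
  shows "Rplus_hat z0 m \<eta> G A = Rplus m \<eta> G A" and "Splus_hat z0 m \<eta> G A = Splus m \<eta> G A"
proof -
  have "z0 \<notin> G" using G(2) closure_subset[of G] by blast
  have from_hat: "\<exists>f. (f holomorphic_on G \<and> continuous_on (closure G) f \<and> (f \<longlongrightarrow> 0) at_infinity) \<and>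
      (\<forall>k\<in>{1..m}. \<forall>s\<in>{0..2*pi}. Ahat z0 \<eta> A k s * fh (zeta z0 \<eta> k s) = A k s * f (\<eta> k s))"
    if fh: "fh holomorphic_on Ghat z0 G \<and> continuous_on (closure (Ghat z0 G)) fh" for fh
  proof -
    obtain f where "f holomorphic_on G" "continuous_on (closure G) f" "(f \<longlongrightarrow> 0) at_infinity"
      and rel: "\<And>z. z \<noteq> z0 \<Longrightarrow> f z = fh (Psi z0 z) * Psi z0 z"
      using fh Psi_transform_from_Ghat[OF G(2) far] by blast
    with boundary_values_Psi_transform[OF z0 rel] show ?thesis by blast
  qed
  have to_hat: "\<exists>fh. (fh holomorphic_on Ghat z0 G \<and> continuous_on (closure (Ghat z0 G)) fh) \<and>
      (\<forall>k\<in>{1..m}. \<forall>s\<in>{0..2*pi}. Ahat z0 \<eta> A k s * fh (zeta z0 \<eta> k s) = A k s * f (\<eta> k s))"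
    if f: "f holomorphic_on G \<and> continuous_on (closure G) f \<and> (f \<longlongrightarrow> 0) at_infinity" for f
  proof -
    obtain fh where "fh holomorphic_on Ghat z0 G" "continuous_on (closure (Ghat z0 G)) fh"
      and rel: "\<And>z. z \<noteq> z0 \<Longrightarrow> f z = fh (Psi z0 z) * Psi z0 z"
      using f Psi_transform_to_Ghat[OF G(1) \<open>z0 \<notin> G\<close> far] by blast
    with boundary_values_Psi_transform[OF z0 rel] show ?thesis by blast
  qed
  note eq = Collect_boundary_relation_eq[OF from_hat to_hat, unfolded conj_assoc]
  show "Rplus_hat z0 m \<eta> G A = Rplus m \<eta> G A"
    unfolding Rplus_def Rplus_hat_def by (rule eq)
  show "Splus_hat z0 m \<eta> G A = Splus m \<eta> G A"
    unfolding Splus_def Splus_hat_def by (rule eq)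
qed

lemma Rminus_Sminus_hat_eq:
  assumes D: "open (Gminus m \<eta>)" "bounded (Gminus m \<eta>)" "z0 \<in> Gminus m \<eta>"
    and z0: "z0 \<notin> Gam m \<eta>"
  shows "Rminus_hat z0 m \<eta> A = Rminus m \<eta> A" and "Sminus_hat z0 m \<eta> A = Sminus m \<eta> A"
proof -
  have from_hat: "\<exists>g. (g holomorphic_on Gminus m \<eta> \<and> continuous_on (closure (Gminus m \<eta>)) g) \<and>
      (\<forall>k\<in>{1..m}. \<forall>s\<in>{0..2*pi}. Ahat z0 \<eta> A k s * gh (zeta z0 \<eta> k s) = A k s * g (\<eta> k s))"
    if gh: "gh holomorphic_on Gminus_hat z0 m \<eta> \<and> continuous_on (closure (Gminus_hat z0 m \<eta>)) gh \<and>
      (gh \<longlongrightarrow> 0) at_infinity" for gh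
  proof -
    obtain g where "g holomorphic_on Gminus m \<eta>" "continuous_on (closure (Gminus m \<eta>)) g"
      and rel: "\<And>z. z \<noteq> z0 \<Longrightarrow> g z = gh (Psi z0 z) * Psi z0 z"
      using gh Psi_transform_from_punctured_image[OF D(1,3)] unfolding Gminus_hat_def by blast
    with boundary_values_Psi_transform[OF z0 rel] show ?thesis by blast
  qed
  have to_hat: "\<exists>gh. (gh holomorphic_on Gminus_hat z0 m \<eta> \<and>
      continuous_on (closure (Gminus_hat z0 m \<eta>)) gh \<and> (gh \<longlongrightarrow> 0) at_infinity) \<and>
      (\<forall>k\<in>{1..m}. \<forall>s\<in>{0..2*pi}. Ahat z0 \<eta> A k s * gh (zeta z0 \<eta> k s) = A k s * g (\<eta> k s))"
    if g: "g holomorphic_on Gminus m \<eta> \<and> continuous_on (closure (Gminus m \<eta>)) g" for g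
  proof -
    obtain gh where "gh holomorphic_on Gminus_hat z0 m \<eta>"
      "continuous_on (closure (Gminus_hat z0 m \<eta>)) gh" "(gh \<longlongrightarrow> 0) at_infinity"
      and rel: "\<And>z. z \<noteq> z0 \<Longrightarrow> g z = gh (Psi z0 z) * Psi z0 z"
      using g Psi_transform_to_punctured_image[OF D] unfolding Gminus_hat_def by blast
    with boundary_values_Psi_transform[OF z0 rel] show ?thesis by blast
  qed
  note eq = Collect_boundary_relation_eq[OF from_hat to_hat, unfolded conj_assoc]
  show "Rminus_hat z0 m \<eta> A = Rminus m \<eta> A"
    unfolding Rminus_def Rminus_hat_def by (rule eq)
  show "Sminus_hat z0 m \<eta> A = Sminus m \<eta> A"
    unfolding Sminus_def Sminus_hat_def by (rule eq)
qed

lemma compact_Gam_k: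
  assumes "\<And>t. (\<eta> k has_vector_derivative \<eta>' t) (at t)"
  shows "compact (Gam_k \<eta> k)"
proof -
  have "continuous_on {0..2*pi} (\<eta> k)"
    using has_vector_derivative_continuous[OF assms] by (simp add: continuous_at_imp_continuous_on)
  then show ?thesis
    unfolding Gam_k_def by (simp add: compact_continuous_image)
qed

lemma
  assumes compact: "\<And>k. k \<in> {1..m} \<Longrightarrow> compact (Gam_k \<eta> k)"
  shows bounded_Gam: "bounded (Gam m \<eta>)"
    and bounded_Gminus: "bounded (Gminus m \<eta>)"
    and open_Gminus: "open (Gminus m \<eta>)"
  unfolding Gam_def Gminus_def
  by (intro bounded_UN open_UN finite_atLeastAtMost ballI compact_imp_bounded bounded_inside
      open_inside compact_imp_closed compact; assumption)+

lemma eventually_notin_bounded_at_infinity: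
  assumes "bounded S"
  shows "eventually (\<lambda>z. z \<notin> S) at_infinity"
proof -
  obtain B where B: "\<forall>x\<in>S. norm x \<le> B"
    using assms by (auto simp: bounded_iff)
  have "x \<notin> S" if "B + 1 \<le> norm x" for x
    using B that by fastforce
  then show ?thesis
    unfolding eventually_at_infinity by blast
qed

lemma inside_point_notin_Gam:
  assumes "z0 \<in> inside (Gam_k \<eta> j)"
    and "\<forall>k\<in>{1..m}. j \<noteq> k \<longrightarrow> Gam_k \<eta> k \<subseteq> outside (Gam_k \<eta> j)"
  shows "z0 \<notin> Gam m \<eta>"
proof
  assume "z0 \<in> Gam m \<eta>"
  then obtain k where "k \<in> {1..m}" "z0 \<in> Gam_k \<eta> k"
    unfolding Gam_def by blast
  moreover have "z0 \<notin> Gam_k \<eta> j" "z0 \<notin> outside (Gam_k \<eta> j)"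
    using assms(1) inside_no_overlap[of "Gam_k \<eta> j"] inside_Int_outside[of "Gam_k \<eta> j"] by blast+
  ultimately show False
    using assms(2) by (cases "k = j") auto
qed

theorem lemma4p2:
  fixes m :: nat and \<eta> A :: "nat \<Rightarrow> real \<Rightarrow> complex" and G :: "complex set" and z0 :: complex
  assumes m_pos: "1 \<le> m"
    and periodic: "\<forall>k\<in>{1..m}. \<forall>s. \<eta> k (s + 2*pi) = \<eta> k s"
    and C2: "\<forall>k\<in>{1..m}. \<exists>d1 d2. \<forall>t. (\<eta> k has_vector_derivative d1 t) (at t) \<and>
               (d1 has_vector_derivative d2 t) (at t) \<and> continuous_on UNIV d2 \<and> d1 t \<noteq> 0"
    and simple: "\<forall>k\<in>{1..m}. inj_on (\<eta> k) {0..<2*pi}"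
    and separated: "\<forall>k\<in>{1..m}. \<forall>l\<in>{1..m}. k \<noteq> l \<longrightarrow> Gam_k \<eta> l \<subseteq> outside (Gam_k \<eta> k)"
    and clockwise: "\<forall>k\<in>{1..m}. \<forall>w\<in>inside (Gam_k \<eta> k).
               winding_number (\<lambda>t. \<eta> k (2*pi*t)) w = -1"
    and G_def: "G = - (Gam m \<eta> \<union> Gminus m \<eta>)"
    and G_region: "open G" "connected G"
    and zero_in: "0 \<in> G"
    and A_nz: "\<forall>k\<in>{1..m}. \<forall>s. A k s \<noteq> 0"
    and A_per: "\<forall>k\<in>{1..m}. \<forall>s. A k (s + 2*pi) = A k s"
    and A_C1: "\<forall>k\<in>{1..m}. \<exists>dA. \<forall>t. (A k has_vector_derivative dA t) (at t) \<and> continuous_on UNIV dA"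
    and z0_in: "z0 \<in> inside (Gam_k \<eta> m)"
  shows "Rplus_hat z0 m \<eta> G A = Rplus m \<eta> G A \<and>
         Splus_hat z0 m \<eta> G A = Splus m \<eta> G A \<and>
         Rminus_hat z0 m \<eta> A = Rminus m \<eta> A \<and>
         Sminus_hat z0 m \<eta> A = Sminus m \<eta> A"
proof -
  \<comment> \<open>Only continuity of the curves, their separation and the position of z0 matter.\<close>
  have compact: "compact (Gam_k \<eta> k)" if k: "k \<in> {1..m}" for k
  proof -
    obtain d1 where "\<And>t. (\<eta> k has_vector_derivative d1 t) (at t)"
      using bspec[OF C2 k] by blast
    then show ?thesis by (rule compact_Gam_k)
  qed
  have m: "m \<in> {1..m}" using m_pos by simp
  then have z0_Gminus: "z0 \<in> Gminus m \<eta>"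
    unfolding Gminus_def using z0_in by (rule UN_I)
  have z0_Gam: "z0 \<notin> Gam m \<eta>"
    by (rule inside_point_notin_Gam[OF z0_in bspec[OF separated m]])
  have bounded: "bounded (Gam m \<eta> \<union> Gminus m \<eta>)"
    using bounded_Gam[OF compact] bounded_Gminus[OF compact] by simp
  have far: "eventually (\<lambda>z. z \<in> G) at_infinity"
    using eventually_notin_bounded_at_infinity[OF bounded] unfolding G_def by simp
  have "inside (Gam_k \<eta> m) \<inter> G = {}"
    using m unfolding G_def Gminus_def by blast
  then have "inside (Gam_k \<eta> m) \<inter> closure G = {}"
    using open_Int_closure_eq_empty open_inside compact_imp_closed compact[OF m] by blast
  then have z0_closure: "z0 \<notin> closure G"
    using z0_in by blast
  show ?thesis
    using Rplus_Splus_hat_eq[OF G_region(1) z0_closure far z0_Gam]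
      Rminus_Sminus_hat_eq[OF open_Gminus[OF compact] bounded_Gminus[OF compact] z0_Gminus z0_Gam]
    by blast
qed

end
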